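(* Let $(\frac pq,\frac rs)$ be a Farey pair of order $n$ with $q\ge 2$. Put $d=\lfloor n/q\rfloor$, $\delta=\gcd(d,s)$, $d=d_1\delta$, $s=s_1\delta$. Let $\alpha\in[0,1]$, $\beta=1-\alpha$, $j\in\{0,\dots,\delta-1\}$, and $$g_{\alpha,j}(t)=(t^q-\beta)^{d_1}-\alpha^{d_1}t^{qd_1-s_1}e^{2\pi i j/\delta},\qquad \hat g_{\alpha,j}(t)=t^{qd_1}-\beta-\alpha t^{qd_1-s_1}e^{2\pi i j/(\delta d_1)}.$$ If $\hat t_1,\dots,\hat t_N$ are the nonzero roots of $\hat g_{\alpha,j}$ listed with multiplicity, then $\hat t_1^{d_1},\dots,\hat t_N^{d_1}$ are the nonzero roots of $g_{\alpha,j}$ listed with multiplicity.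
   Context: $\mathcal{F}_n=\{p/q:0\le p<q\le n,\ \gcd(p,q)=1\}$; a Farey pair of order $n$ is a pair $(\frac pq,\frac rs)$ of elements of $\mathcal F_n$ with $\frac pq<\frac rs$ and no element of $\mathcal F_n$ strictly between them. $g_{\alpha,j}$ and $\hat g_{\alpha,j}$ are regarded as rational functions of $t$ (the exponent $qd_1-s_1$ may be negative). *)

theory Defs
  imports "HOL-Analysis.Analysis" "HOL-Computational_Algebra.Fundamental_Theorem_Algebra"
begin

definition farey :: "nat \<Rightarrow> rat set" where
  "farey n = {of_nat p / of_nat q | p q. p < q \<and> q \<le> n \<and> coprime p q}"

definition farey_pair :: "nat \<Rightarrow> nat \<Rightarrow> nat \<Rightarrow> nat \<Rightarrow> nat \<Rightarrow> bool" where
  "farey_pair n p q r s \<longleftrightarrow>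
     p < q \<and> q \<le> n \<and> coprime p q \<and> r < s \<and> s \<le> n \<and> coprime r s \<and>
     of_nat p / of_nat q < (of_nat r / of_nat s :: rat) \<and>
     \<not> (\<exists>x\<in>farey n. of_nat p / of_nat q < x \<and> x < of_nat r / of_nat s)"

definition nz_roots :: "complex poly \<Rightarrow> complex multiset" where
  "nz_roots P = filter_mset (\<lambda>z. z \<noteq> 0) (proots P)"

text \<open>Laurent polynomials: t^k * P(t) with k an integer, P a polynomial.
  Its nonzero roots (with multiplicity) are those of P, since t^k is a unit
  away from 0.  We represent g and g-hat as sums of a polynomial and a single
  monomial c t^e with e :: int possibly negative, and clear denominators by
  multiplying with t^m for any m with e + m >= 0.\<close>
definition laurent_poly :: "complex poly \<Rightarrow> complex \<Rightarrow> int \<Rightarrow> complex poly" where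
  "laurent_poly A c e =
     (let m = nat (- e) in monom 1 m * A + monom c (nat (e + int m)))"

definition g_poly :: "nat \<Rightarrow> nat \<Rightarrow> nat \<Rightarrow> real \<Rightarrow> nat \<Rightarrow> nat \<Rightarrow> complex poly" where
  "g_poly q d1 s1 \<alpha> \<delta> j =
     laurent_poly (([: - complex_of_real (1 - \<alpha>) :] + monom 1 q) ^ d1)
       (- (complex_of_real \<alpha> ^ d1 * exp (2 * pi * \<i> * of_nat j / of_nat \<delta>)))
       (int (q * d1) - int s1)"

definition ghat_poly :: "nat \<Rightarrow> nat \<Rightarrow> nat \<Rightarrow> real \<Rightarrow> nat \<Rightarrow> nat \<Rightarrow> complex poly" where
  "ghat_poly q d1 s1 \<alpha> \<delta> j =
     laurent_poly (monom 1 (q * d1) - [: complex_of_real (1 - \<alpha>) :])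
       (- (complex_of_real \<alpha> * exp (2 * pi * \<i> * of_nat j / (of_nat \<delta> * of_nat d1))))
       (int (q * d1) - int s1)"

end

theory Submission
  imports Defs "HOL-Number_Theory.Cong"
begin

text \<open>
  Let \<open>\<omega> = exp (2\<pi>i/d1)\<close>. After clearing the Laurent denominator \<open>t^m\<close>, write
  \<open>ghat(t) = X - Y\<close> with \<open>X = t^m (t^(q d1) - \<beta>)\<close> and \<open>Y\<close> the monomial term. Then
  \<open>ghat(\<omega>^k t) = \<omega>^(km) (X - \<xi>^k Y)\<close> with \<open>\<xi> = \<omega>^(-s1)\<close>, and \<open>\<xi>\<close> is a primitive
  \<open>d1\<close>-th root of unity because \<open>gcd s1 d1 = 1\<close>. Hence the product of the \<open>d1\<close> rotations
  is a nonzero constant times \<open>X^d1 - Y^d1 = g(t^d1)\<close>. Now take \<open>d1\<close>-th powers of the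
  nonzero roots on both sides: every rotation contributes the \<open>d1\<close>-th powers of the roots
  of \<open>ghat\<close>, while \<open>g(t^d1)\<close> contributes every nonzero root of \<open>g\<close> exactly \<open>d1\<close> times.
  Cancelling the factor \<open>d1\<close> gives the claim.
\<close>

lemma nz_roots_mult:
  "p \<noteq> 0 \<Longrightarrow> q \<noteq> 0 \<Longrightarrow> nz_roots (p * q) = nz_roots p + nz_roots q"
  by (simp add: nz_roots_def proots_mult)

lemma nz_roots_smult [simp]: "c \<noteq> 0 \<Longrightarrow> nz_roots (smult c p) = nz_roots p"
  by (simp add: nz_roots_def)

lemma nz_roots_const [simp]: "nz_roots [:c:] = {#}"
  by (simp add: nz_roots_def)

lemma nz_roots_linear: "nz_roots [:a, 1:] = (if a = 0 then {#} else {#-a#})"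
  by (simp add: nz_roots_def)

lemma image_mset_nz_roots_prod:
  fixes f :: "'a \<Rightarrow> complex poly"
  assumes "\<And>k. k \<in> A \<Longrightarrow> f k \<noteq> 0"
  shows "image_mset h (nz_roots (\<Prod>k\<in>A. f k)) = (\<Sum>k\<in>A. image_mset h (nz_roots (f k)))"
  using assms
proof (induction A rule: infinite_finite_induct)
  case (insert x F)
  then have "(\<Prod>k\<in>F. f k) \<noteq> 0" by auto
  with insert show ?case by (simp add: nz_roots_mult)
qed (simp_all add: nz_roots_def)

lemma nonzero_complex_poly_induct [consumes 1, case_names const linear mult]:
  fixes p :: "complex poly"
  assumes "p \<noteq> 0"
    and const: "\<And>c. c \<noteq> 0 \<Longrightarrow> P [:c:]"
    and linear: "\<And>z. P [:-z, 1:]"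
    and mult: "\<And>p q. p \<noteq> 0 \<Longrightarrow> q \<noteq> 0 \<Longrightarrow> P p \<Longrightarrow> P q \<Longrightarrow> P (p * q)"
  shows "P p"
proof -
  have lc: "lead_coeff p \<noteq> 0" using assms(1) by simp
  have "P (smult (lead_coeff p) (\<Prod>x\<in>#M. [:-x, 1:]))" for M
  proof (induction M)
    case empty
    show ?case using const[OF lc] by simp
  next
    case (add x M)
    have "smult (lead_coeff p) (\<Prod>x\<in>#M. [:-x, 1:]) \<noteq> 0"
      using lc by (simp add: prod_mset_zero_iff image_iff)
    moreover have "smult (lead_coeff p) (\<Prod>x\<in>#add_mset x M. [:-x, 1:])
        = [:-x, 1:] * smult (lead_coeff p) (\<Prod>x\<in>#M. [:-x, 1:])"
      by simp
    ultimately show ?case using add.IH by (metis mult linear pCons_eq_0_iff one_neq_zero)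
  qed
  from this[of "proots p"] show ?thesis by (simp only: complex_poly_decompose_multiset)
qed

lemma image_power_nz_roots_linear_pcompose_monom:
  fixes z :: complex
  assumes "d > 0"
  shows "image_mset (\<lambda>w. w ^ d) (nz_roots (pcompose [:-z, 1:] (monom 1 d)))
           = repeat_mset d (nz_roots [:-z, 1:])"
proof -
  define Q where "Q = pcompose [:-z, 1:] (monom (1::complex) d)"
  have poly_Q: "poly Q w = w ^ d - z" for w by (simp add: Q_def poly_pcompose poly_monom)
  have "Q \<noteq> 0" "degree Q = d"
    unfolding Q_def using assms by (simp_all add: pcompose_eq_0_iff degree_pcompose degree_monom_eq)
  then have roots_Q: "w ^ d = z" if "w \<in># proots Q" for w using that poly_Q by auto
  show ?thesis
  proof (cases "z = 0")
    case True
    then have "nz_roots Q = {#}"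
      using roots_Q by (auto simp: nz_roots_def filter_mset_eq_conv)
    with True show ?thesis by (simp add: Q_def nz_roots_linear)
  next
    case False
    then have "nz_roots Q = proots Q"
      using roots_Q assms by (force simp: nz_roots_def filter_mset_eq_conv)
    then have "image_mset (\<lambda>w. w ^ d) (nz_roots Q) = image_mset (\<lambda>_. z) (proots Q)"
      using roots_Q by (auto intro: image_mset_cong)
    also have "\<dots> = replicate_mset d z"
      using image_mset_const_eq[of z "proots Q"] by (simp add: size_proots_complex \<open>degree Q = d\<close>)
    finally show ?thesis using False by (simp add: Q_def nz_roots_linear)
  qed
qed

lemma image_power_nz_roots_pcompose_monom:
  fixes p :: "complex poly"
  assumes "d > 0"
  shows "image_mset (\<lambda>w. w ^ d) (nz_roots (pcompose p (monom 1 d)))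
           = repeat_mset d (nz_roots p)"
proof (cases "p = 0")
  case False
  have nonzero: "pcompose r (monom 1 d) \<noteq> 0" if "r \<noteq> 0" for r :: "complex poly"
    using that assms by (simp add: pcompose_eq_0_iff degree_monom_eq)
  from False show ?thesis
  proof (induction p rule: nonzero_complex_poly_induct)
    case (linear z)
    show ?case using image_power_nz_roots_linear_pcompose_monom[OF assms] .
  next
    case (mult p q)
    then show ?case by (simp add: pcompose_mult nz_roots_mult nonzero)
  qed simp
qed (simp add: nz_roots_def)

lemma image_power_nz_roots_pcompose_scale:
  fixes p :: "complex poly"
  assumes "l \<noteq> 0" "l ^ d = 1"
  shows "image_mset (\<lambda>w. w ^ d) (nz_roots (pcompose p [:0, l:]))
           = image_mset (\<lambda>w. w ^ d) (nz_roots p)"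
proof (cases "p = 0")
  case False
  have nonzero: "pcompose r [:0, l:] \<noteq> 0" if "r \<noteq> 0" for r :: "complex poly"
    using that assms by (simp add: pcompose_eq_0_iff)
  from False show ?thesis
  proof (induction p rule: nonzero_complex_poly_induct)
    case (linear z)
    have "pcompose [:-z, 1:] [:0, l:] = smult l [:-(z / l), 1:]"
      using assms by (simp add: pcompose_pCons)
    then have "nz_roots (pcompose [:-z, 1:] [:0, l:]) = nz_roots [:-(z / l), 1:]"
      using nz_roots_smult[OF assms(1)] by presburger
    then show ?case using assms by (simp add: nz_roots_linear power_divide)
  next
    case (mult p q)
    then show ?case by (simp add: pcompose_mult nz_roots_mult nonzero)
  qed simp
qed (simp add: nz_roots_def)

lemma prod_linear_primitive_root:
  fixes \<xi> :: "'a :: idom"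
  assumes "d > 0" "\<xi> ^ d = 1" "inj_on (\<lambda>k. \<xi> ^ k) {..<d}"
  shows "(\<Prod>k<d. [:- (\<xi> ^ k), 1:]) = monom 1 d - 1"
proof (rule poly_eqI_degree_lead_coeff[where n = d and A = "(\<lambda>k. \<xi> ^ k) ` {..<d}"])
  have degree_prod: "degree (\<Prod>k<d. [:- (\<xi> ^ k), 1:]) = d"
    by (subst degree_prod_sum_eq) auto
  then show "coeff (\<Prod>k<d. [:- (\<xi> ^ k), 1:]) d = coeff (monom 1 d - 1) d"
    using assms(1) lead_coeff_prod[of "\<lambda>k. [:- (\<xi> ^ k), 1:]" "{..<d}"] by simp
  show "d \<le> card ((\<lambda>k. \<xi> ^ k) ` {..<d})" using card_image[OF assms(3)] by simp
  show "degree (\<Prod>k<d. [:- (\<xi> ^ k), 1:]) \<le> d" using degree_prod by simp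
  show "degree (monom 1 d - 1 :: 'a poly) \<le> d"
    by (intro degree_diff_le) (auto simp: degree_monom_le)
  fix z assume "z \<in> (\<lambda>k. \<xi> ^ k) ` {..<d}"
  then obtain k where k: "k < d" "z = \<xi> ^ k" by auto
  then have "z ^ d = 1" using assms(2) by (metis power_mult mult.commute power_one)
  moreover have "poly (\<Prod>k<d. [:- (\<xi> ^ k), 1:]) z = 0"
    using k by (auto simp: poly_prod)
  ultimately show "poly (\<Prod>k<d. [:- (\<xi> ^ k), 1:]) z = poly (monom 1 d - 1) z"
    by (simp add: poly_monom)
qed

lemma prod_diff_primitive_root:
  fixes \<xi> x y :: "'a :: field"
  assumes "d > 0" "\<xi> ^ d = 1" "inj_on (\<lambda>k. \<xi> ^ k) {..<d}"
  shows "(\<Prod>k<d. x - \<xi> ^ k * y) = x ^ d - y ^ d"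
proof (cases "y = 0")
  case True
  then show ?thesis using assms(1) by simp
next
  case False
  have "(\<Prod>k<d. x - \<xi> ^ k * y) = (\<Prod>k<d. y * (x / y - \<xi> ^ k))"
    using False by (intro prod.cong) (auto simp: field_simps)
  also have "\<dots> = y ^ d * poly (\<Prod>k<d. [:- (\<xi> ^ k), 1:]) (x / y)"
    by (simp add: prod.distrib poly_prod)
  also have "\<dots> = y ^ d * ((x / y) ^ d - 1)"
    by (simp add: prod_linear_primitive_root[OF assms] poly_monom)
  also have "\<dots> = x ^ d - y ^ d"
    using False by (simp add: power_divide right_diff_distrib)
  finally show ?thesis .
qed

lemma exp_root_unity_power:
  "exp (2 * of_real pi * \<i> / of_nat d) ^ k = exp (2 * of_real pi * \<i> * of_nat k / of_nat d)"
  by (simp add: exp_of_nat_mult[symmetric] ac_simps)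

lemma root_unity_power_power_eq_1:
  "d > 0 \<Longrightarrow> (exp (2 * of_real pi * \<i> / of_nat d) ^ k) ^ d = 1"
  using complex_root_unity[of d k] by (simp add: exp_root_unity_power)

lemma inj_on_power_root_unity_coprime:
  assumes "d > 0" "coprime s d"
  shows "inj_on (\<lambda>k. (inverse (exp (2 * of_real pi * \<i> / of_nat d)) ^ s) ^ k) {..<d}"
proof (rule inj_onI)
  let ?\<omega> = "exp (2 * of_real pi * \<i> / of_nat d)"
  fix x y
  assume xy: "x \<in> {..<d}" "y \<in> {..<d}" and "(inverse ?\<omega> ^ s) ^ x = (inverse ?\<omega> ^ s) ^ y"
  then have "?\<omega> ^ (s * x) = ?\<omega> ^ (s * y)"
    by (simp add: power_mult power_inverse)
  then have "[s * x = s * y] (mod d)"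
    using assms(1)
    by (simp add: exp_root_unity_power complex_root_unity_eq cong_def del: of_nat_mult)
  then have "[x = y] (mod d)" using cong_mult_lcancel_nat[OF assms(2)] by simp
  then show "x = y" using xy cong_less_modulus_unique_nat by auto
qed

lemma image_power_nz_roots_eq_if_rotations_prod:
  fixes P Q :: "complex poly" and \<omega> c :: complex
  assumes d: "d > 0" and \<omega>: "\<omega> ^ d = 1" and "Q \<noteq> 0" "c \<noteq> 0"
    and rotations: "\<And>t. c * poly P (t ^ d) = (\<Prod>k<d. poly Q (\<omega> ^ k * t))"
  shows "image_mset (\<lambda>w. w ^ d) (nz_roots Q) = nz_roots P"
proof -
  have "\<omega> \<noteq> 0" using d \<omega> by (metis power_0_left less_not_refl zero_neq_one)
  define H where "H k = pcompose Q [:0, \<omega> ^ k:]" for k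
  have H_nonzero: "H k \<noteq> 0" for k
    using \<open>Q \<noteq> 0\<close> \<open>\<omega> \<noteq> 0\<close> by (simp add: H_def pcompose_eq_0_iff)
  have "smult c (pcompose P (monom 1 d)) = (\<Prod>k<d. H k)"
    by (rule poly_eq_poly_eq_iff[THEN iffD1])
       (simp add: fun_eq_iff H_def poly_prod poly_pcompose poly_monom rotations mult.commute)
  then have "nz_roots (pcompose P (monom 1 d)) = nz_roots (\<Prod>k<d. H k)"
    using nz_roots_smult[OF \<open>c \<noteq> 0\<close>] by metis
  have sum_const: "(\<Sum>k<n. M) = repeat_mset n M" for n and M :: "complex multiset"
    by (induction n) simp_all
  have "repeat_mset d (nz_roots P)
      = image_mset (\<lambda>w. w ^ d) (nz_roots (pcompose P (monom 1 d)))"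
    using image_power_nz_roots_pcompose_monom[OF d] by simp
  also have "\<dots> = (\<Sum>k<d. image_mset (\<lambda>w. w ^ d) (nz_roots (H k)))"
    using \<open>nz_roots (pcompose P (monom 1 d)) = _\<close> H_nonzero
    by (simp add: image_mset_nz_roots_prod)
  also have "\<dots> = (\<Sum>k<d. image_mset (\<lambda>w. w ^ d) (nz_roots Q))"
    unfolding H_def using \<open>\<omega> \<noteq> 0\<close> \<omega>
    by (intro sum.cong refl image_power_nz_roots_pcompose_scale)
       (simp_all add: power_mult[symmetric] mult.commute[of _ d] power_mult)
  also have "\<dots> = repeat_mset d (image_mset (\<lambda>w. w ^ d) (nz_roots Q))"
    by (rule sum_const)
  finally show ?thesis using d by (simp add: repeat_mset_cancel1)
qed

lemma poly_laurent_poly: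
  "poly (laurent_poly A c e) x = x ^ nat (- e) * poly A x + c * x ^ nat (e + int (nat (- e)))"
  by (simp add: laurent_poly_def Let_def poly_monom)

lemma laurent_poly_nonzero:
  assumes "coeff A n \<noteq> 0" "e < int n"
  shows "laurent_poly A c e \<noteq> 0"
proof -
  have "coeff (laurent_poly A c e) (nat (- e) + n) = coeff A n"
    using assms(2) by (simp add: laurent_poly_def Let_def coeff_monom_mult coeff_monom) arith
  then show ?thesis using assms(1) by auto
qed

lemma ghat_poly_rotations_prod:
  fixes q d1 s1 \<delta> j :: nat and \<alpha> :: real and t :: complex
  assumes "d1 > 0" "coprime s1 d1"
  defines "\<omega> \<equiv> exp (2 * of_real pi * \<i> / of_nat d1)"
    and "m \<equiv> nat (int s1 - int (q * d1))"
  shows "(\<Prod>k<d1. poly (ghat_poly q d1 s1 \<alpha> \<delta> j) (\<omega> ^ k * t))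
           = (\<Prod>k<d1. (\<omega> ^ k) ^ m) * poly (g_poly q d1 s1 \<alpha> \<delta> j) (t ^ d1)"
proof -
  define N where "N = q * d1"
  define E where "E = nat (int N - int s1 + int m)"
  have E_s1: "E + s1 = N + m" unfolding E_def m_def N_def by linarith
  define \<beta> where "\<beta> = complex_of_real (1 - \<alpha>)"
  define a where "a = complex_of_real \<alpha>"
  define \<zeta> where "\<zeta> = exp (2 * pi * \<i> * of_nat j / (of_nat \<delta> * of_nat d1))"
  have \<zeta>_power: "\<zeta> ^ d1 = exp (2 * pi * \<i> * of_nat j / of_nat \<delta>)"
    unfolding \<zeta>_def exp_of_nat_mult[symmetric] using assms(1) by (simp add: field_simps)
  have poly_ghat:
    "poly (ghat_poly q d1 s1 \<alpha> \<delta> j) x = x ^ m * (x ^ N - \<beta>) - a * \<zeta> * x ^ E" for x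
    by (simp add: ghat_poly_def poly_laurent_poly poly_monom m_def E_def N_def \<beta>_def a_def \<zeta>_def)
  have poly_g:
    "poly (g_poly q d1 s1 \<alpha> \<delta> j) u = u ^ m * (u ^ q - \<beta>) ^ d1 - a ^ d1 * \<zeta> ^ d1 * u ^ E" for u
    by (simp add: g_poly_def poly_laurent_poly poly_monom m_def E_def N_def \<beta>_def a_def \<zeta>_power)
       (simp add: algebra_simps)
  define X where "X = t ^ m * (t ^ N - \<beta>)"
  define Y where "Y = a * \<zeta> * t ^ E"
  have rotate: "poly (ghat_poly q d1 s1 \<alpha> \<delta> j) (\<mu> * t) = \<mu> ^ m * (X - inverse \<mu> ^ s1 * Y)"
    if "\<mu> ^ d1 = 1" for \<mu>
  proof -
    have "\<mu> \<noteq> 0" using that assms(1) by (metis power_0_left less_not_refl zero_neq_one)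
    have "\<mu> ^ N = 1" unfolding N_def using that by (metis mult.commute power_mult power_one)
    then have "\<mu> ^ E * \<mu> ^ s1 = \<mu> ^ m" by (metis E_s1 power_add mult_1_left)
    then have "\<mu> ^ E = \<mu> ^ m * inverse \<mu> ^ s1"
      using \<open>\<mu> \<noteq> 0\<close> by (simp add: field_simps power_inverse)
    then show ?thesis
      unfolding poly_ghat X_def Y_def power_mult_distrib \<open>\<mu> ^ N = 1\<close> by (simp add: algebra_simps)
  qed
  have \<omega>_power: "(\<omega> ^ k) ^ d1 = 1" for k
    unfolding \<omega>_def using assms(1) by (rule root_unity_power_power_eq_1)
  define \<xi> where "\<xi> = inverse \<omega> ^ s1"
  have \<xi>_power: "\<xi> ^ d1 = 1"
    unfolding \<xi>_def using \<omega>_power[of s1] by (simp add: power_inverse)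
  have \<xi>_inj: "inj_on (\<lambda>k. \<xi> ^ k) {..<d1}"
    unfolding \<xi>_def \<omega>_def by (rule inj_on_power_root_unity_coprime[OF assms(1,2)])
  have "(\<Prod>k<d1. poly (ghat_poly q d1 s1 \<alpha> \<delta> j) (\<omega> ^ k * t))
      = (\<Prod>k<d1. (\<omega> ^ k) ^ m * (X - \<xi> ^ k * Y))"
    unfolding \<xi>_def using \<omega>_power
    by (simp add: rotate power_inverse flip: power_mult) (simp add: mult.commute power_mult)
  also have "\<dots> = (\<Prod>k<d1. (\<omega> ^ k) ^ m) * (X ^ d1 - Y ^ d1)"
    by (simp add: prod.distrib prod_diff_primitive_root[OF assms(1) \<xi>_power \<xi>_inj])
  also have "X ^ d1 - Y ^ d1 = poly (g_poly q d1 s1 \<alpha> \<delta> j) (t ^ d1)"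
    unfolding poly_g X_def Y_def N_def
    by (simp add: power_mult_distrib flip: power_mult) (simp add: ac_simps)
  finally show ?thesis .
qed

lemma image_power_nz_roots_ghat_poly:
  fixes q d1 s1 \<delta> j :: nat and \<alpha> :: real
  assumes "q > 0" "d1 > 0" "s1 > 0" "coprime s1 d1"
  shows "image_mset (\<lambda>w. w ^ d1) (nz_roots (ghat_poly q d1 s1 \<alpha> \<delta> j))
           = nz_roots (g_poly q d1 s1 \<alpha> \<delta> j)"
proof -
  define \<omega> where "\<omega> = exp (2 * of_real pi * \<i> / of_nat d1)"
  define m where "m = nat (int s1 - int (q * d1))"
  have \<omega>_power: "(\<omega> ^ k) ^ d1 = 1" for k
    unfolding \<omega>_def using assms(2) by (rule root_unity_power_power_eq_1)
  have "\<omega> \<noteq> 0" unfolding \<omega>_def by simp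
  have "q * d1 > 0" using assms(1,2) by simp
  then have ghat_nonzero: "ghat_poly q d1 s1 \<alpha> \<delta> j \<noteq> 0"
    unfolding ghat_poly_def using assms(3)
    by (intro laurent_poly_nonzero[where n = "q * d1"]) (auto simp: coeff_monom coeff_pCons split: nat.split)
  have const_nonzero: "(\<Prod>k<d1. (\<omega> ^ k) ^ m) \<noteq> 0" using \<open>\<omega> \<noteq> 0\<close> by simp
  have "\<omega> ^ d1 = 1" using \<omega>_power[of 1] by simp
  show ?thesis
  proof (rule image_power_nz_roots_eq_if_rotations_prod
      [OF assms(2) \<open>\<omega> ^ d1 = 1\<close> ghat_nonzero const_nonzero])
    show "(\<Prod>k<d1. (\<omega> ^ k) ^ m) * poly (g_poly q d1 s1 \<alpha> \<delta> j) (t ^ d1)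
        = (\<Prod>k<d1. poly (ghat_poly q d1 s1 \<alpha> \<delta> j) (\<omega> ^ k * t))" for t
      unfolding \<omega>_def m_def by (rule ghat_poly_rotations_prod[OF assms(2,4), symmetric])
  qed
qed

theorem lemma4p4:
  fixes n p q r s d \<delta> d1 s1 j :: nat and \<alpha> :: real
  assumes "farey_pair n p q r s"
    and "q \<ge> 2"
    and "d = n div q"
    and "\<delta> = gcd d s"
    and "d = d1 * \<delta>"
    and "s = s1 * \<delta>"
    and "0 \<le> \<alpha>" and "\<alpha> \<le> 1"
    and "j < \<delta>"
  shows "image_mset (\<lambda>w. w ^ d1) (nz_roots (ghat_poly q d1 s1 \<alpha> \<delta> j))
           = nz_roots (g_poly q d1 s1 \<alpha> \<delta> j)"
proof (rule image_power_nz_roots_ghat_poly)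
  have "q \<le> n" "s > 0" using assms(1) by (auto simp: farey_pair_def)
  then have "d > 0" using assms(2,3) by (simp add: div_greater_zero_iff)
  then show "q > 0" "d1 > 0" "s1 > 0" using assms(2,5,6) \<open>s > 0\<close> by simp_all
  have "\<delta> * gcd d1 s1 = \<delta>"
    using assms(4,5,6) by (metis gcd_mult_distrib_nat mult.commute)
  then show "coprime s1 d1"
    using \<open>d > 0\<close> assms(5) by (simp add: coprime_iff_gcd_eq_1 gcd.commute)
qed

end
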